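(* Let $m\ge1$ be an integer and $p=1/2^m$. Let $f:\{0,1\}^n\to\mathbb{R}$ and $g=\mathrm{Red}(f):\{0,1\}^{mn}\to\mathbb{R}$ as defined below. For $S\subseteq\{1,\dots,mn\}$ let $S_i=S\cap\{(i-1)m+1,\dots,im\}$ for $i=1,\dots,n$, let $S'=\{i:|S_i|>0\}\subseteq\{1,\dots,n\}$ and $k=|S'|$. Then \[ \hat g(S)=\Big(-\sqrt{\tfrac{p}{1-p}}\Big)^k(-1)^{|S|}\hat f(S'), \] where $\hat g$ is w.r.t. the uniform measure on $\{0,1\}^{mn}$ and $\hat f$ is w.r.t. $\mu_p$.
   Context: For $0<p<1$, $\mu_p$ denotes the product measure on $\{0,1\}^n$ with $\mu_p(x)=p^{\sum_i x_i}(1-p)^{n-\sum_i x_i}$; $\mu_{1/2}$ is the uniform measure. Elements of $\{0,1\}^n$ are identified with subsets of $\{1,\dots,n\}$. For $S,T\subseteq\{1,\dots,n\}$, $u_S(T)=\big(-\sqrt{(1-p)/p}\big)^{|S\cap T|}\big(\sqrt{p/(1-p)}\big)^{|S\setminus T|}$ (for $p=1/2$, $u_S(T)=(-1)^{|S\cap T|}$); these form an orthonormal basis of $L^2(\mu_p)$ and $\hat f(S)=\mathbb{E}_{\mu_p}[fu_S]$ is the Fourier–Walsh coefficient, so $f=\sum_S\hat f(S)u_S$. Reduction for $p=t/2^m$ (here $t=1$): write $y\in\{0,1\}^{mn}$ as $(y^1,\dots,y^n)$, $y^i=(y^i_1,\dots,y^i_m)\in\{0,1\}^m$, where $y^i_j$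 is coordinate $(i-1)m+j$ of $y$. Let $\mathrm{Bin}(y^i)=\sum_{j=0}^{m-1}2^jy^i_{m-j}$, $h(y^i)=1$ if $\mathrm{Bin}(y^i)\ge 2^m-t$ and $0$ otherwise, and $\mathrm{Red}(f)=g$, $g(y)=f(h(y^1),\dots,h(y^n))$. *)

theory Defs
  imports Complex_Main
begin

text \<open>Points of the cube {0,1}^n are identified with subsets of {1..n}.\<close>

definition mu :: "real \<Rightarrow> nat \<Rightarrow> nat set \<Rightarrow> real" where
  "mu p n T = p ^ card T * (1 - p) ^ (n - card T)"

definition walsh :: "real \<Rightarrow> nat set \<Rightarrow> nat set \<Rightarrow> real" where
  "walsh p S T = (- sqrt ((1 - p) / p)) ^ card (S \<inter> T) * (sqrt (p / (1 - p))) ^ card (S - T)"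

definition fourier :: "real \<Rightarrow> nat \<Rightarrow> (nat set \<Rightarrow> real) \<Rightarrow> nat set \<Rightarrow> real" where
  "fourier p n f S = (\<Sum>T\<in>Pow {1..n}. mu p n T * f T * walsh p S T)"

definition blockbit :: "nat \<Rightarrow> nat set \<Rightarrow> nat \<Rightarrow> nat \<Rightarrow> nat" where
  "blockbit m y i j = (if (i - 1) * m + j \<in> y then 1 else 0)"

definition Bin :: "nat \<Rightarrow> nat set \<Rightarrow> nat \<Rightarrow> nat" where
  "Bin m y i = (\<Sum>j = 0..m-1. 2 ^ j * blockbit m y i (m - j))"

text \<open>h with t = 1: h(y^i) = 1 iff Bin(y^i) >= 2^m - 1.\<close>
definition hred :: "nat \<Rightarrow> nat set \<Rightarrow> nat \<Rightarrow> bool" where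
  "hred m y i \<longleftrightarrow> Bin m y i \<ge> 2 ^ m - 1"

definition Red :: "nat \<Rightarrow> nat \<Rightarrow> (nat set \<Rightarrow> real) \<Rightarrow> nat set \<Rightarrow> real" where
  "Red m n f y = f {i \<in> {1..n}. hred m y i}"

definition block :: "nat \<Rightarrow> nat set \<Rightarrow> nat \<Rightarrow> nat set" where
  "block m S i = S \<inter> {(i - 1) * m + 1 .. i * m}"

definition Sprime :: "nat \<Rightarrow> nat \<Rightarrow> nat set \<Rightarrow> nat set" where
  "Sprime m n S = {i \<in> {1..n}. card (block m S i) > 0}"

end

theory Submission
  imports Defs "HOL-Library.Disjoint_Sets"
begin

(*
  In each block of m uniform bits, h is 1 exactly when the block is full, an event of probability
  p = 2^-m.  Grouping the uniform Fourier sum of g by the vector x of block values, the sum over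
  each fibre factorises over the blocks: in block i it is (-1)^|S_i| times p, 1 - p or -p
  according as i \<in> x, S_i is empty, or neither (a nontrivial character sums to zero over the
  block).  Up to the factor (-sqrt (p / (1 - p)))^|S'|, the same product is mu_p(x) u_S'(x).
*)

lemma sum_Pow_Un_mult:
  fixes F G :: "'a set \<Rightarrow> 'b::comm_semiring_1"
  assumes "finite A" "finite B" "A \<inter> B = {}"
  shows "(\<Sum>y\<in>Pow (A \<union> B). F (y \<inter> A) * G (y \<inter> B)) = (\<Sum>a\<in>Pow A. F a) * (\<Sum>b\<in>Pow B. G b)"
proof -
  have split: "(a \<union> b) \<inter> A = a" "(a \<union> b) \<inter> B = b" if "a \<subseteq> A" "b \<subseteq> B" for a b
    using assms(3) that by blast+
  have "(\<Sum>a\<in>Pow A. F a) * (\<Sum>b\<in>Pow B. G b) = (\<Sum>(a, b)\<in>Pow A \<times> Pow B. F a * G b)"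
    by (simp add: sum_product sum.cartesian_product)
  also have "\<dots> = (\<Sum>y\<in>Pow (A \<union> B). F (y \<inter> A) * G (y \<inter> B))"
    by (rule sum.reindex_bij_witness[where i="\<lambda>y. (y \<inter> A, y \<inter> B)" and j="\<lambda>(a, b). a \<union> b"])
      (use assms(3) in \<open>auto simp: split\<close>)
  finally show ?thesis by simp
qed

lemma sum_Pow_UN_prod:
  fixes F :: "'i \<Rightarrow> 'a set \<Rightarrow> 'b::comm_semiring_1"
  assumes "finite I" "\<And>i. i \<in> I \<Longrightarrow> finite (A i)" "disjoint_family_on A I"
  shows "(\<Sum>y\<in>Pow (\<Union>i\<in>I. A i). \<Prod>i\<in>I. F i (y \<inter> A i)) = (\<Prod>i\<in>I. \<Sum>z\<in>Pow (A i). F i z)"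
  using assms
proof (induction I rule: finite_induct)
  case (insert j I)
  let ?U = "\<Union>i\<in>I. A i"
  have disj: "A j \<inter> ?U = {}" and "disjoint_family_on A I"
    using insert by (simp_all add: disjoint_family_on_insert)
  have "(\<Prod>i\<in>insert j I. F i (y \<inter> A i)) = F j (y \<inter> A j) * (\<Prod>i\<in>I. F i ((y \<inter> ?U) \<inter> A i))" for y
  proof -
    have "(\<Prod>i\<in>I. F i (y \<inter> A i)) = (\<Prod>i\<in>I. F i ((y \<inter> ?U) \<inter> A i))"
      by (intro prod.cong refl arg_cong[where f="F _"]) blast
    with insert show ?thesis by simp
  qed
  then have "(\<Sum>y\<in>Pow (\<Union>i\<in>insert j I. A i). \<Prod>i\<in>insert j I. F i (y \<inter> A i))
      = (\<Sum>y\<in>Pow (A j \<union> ?U). F j (y \<inter> A j) * (\<Prod>i\<in>I. F i ((y \<inter> ?U) \<inter> A i)))"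
    by simp
  also have "\<dots> = (\<Sum>z\<in>Pow (A j). F j z) * (\<Sum>u\<in>Pow ?U. \<Prod>i\<in>I. F i (u \<inter> A i))"
    using insert disj by (intro sum_Pow_Un_mult[where G = "\<lambda>u. \<Prod>i\<in>I. F i (u \<inter> A i)"]) auto
  finally show ?case
    using insert \<open>disjoint_family_on A I\<close> by simp
qed simp

lemma sum_Pow_minus_one_power_card_Int:
  assumes "finite B"
  shows "(\<Sum>z\<in>Pow B. (-1::'a::comm_ring_1) ^ card (A \<inter> z)) = (if A \<inter> B = {} then 2 ^ card B else 0)"
proof -
  have "(\<Sum>z\<in>Pow B. (-1::'a) ^ card (A \<inter> z))
      = (\<Sum>z\<in>Pow B. (\<Prod>x\<in>z. if x \<in> A then -1 else 1) * (\<Prod>x\<in>B - z. 1))"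
    using assms by (intro sum.cong) (auto simp: prod.If_cases Int_commute finite_subset)
  also have "\<dots> = (\<Prod>x\<in>B. (if x \<in> A then -1 else 1) + 1)"
    using assms by (rule prod_add[symmetric])
  also have "\<dots> = (if A \<inter> B = {} then 2 ^ card B else 0)"
  proof (cases "A \<inter> B = {}")
    case True
    then have "(\<Prod>x\<in>B. (if x \<in> A then -1 else 1) + 1) = (\<Prod>x\<in>B. 2::'a)"
      by (intro prod.cong) (auto simp: one_add_one)
    with True show ?thesis by simp
  next
    case False
    then obtain x where "x \<in> A" "x \<in> B" by blast
    with assms False show ?thesis by (auto intro!: prod_zero)
  qed
  finally show ?thesis .
qed

lemma sum_Pow_indicator_subset:
  fixes p :: real
  assumes "finite B" "p = (1/2) ^ card B"
  shows "p * (\<Sum>z\<in>Pow B. if (B \<subseteq> z) = e then (-1) ^ card (S \<inter> z) else 0)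
       = (-1) ^ card (S \<inter> B) * (if e then p else if S \<inter> B = {} then 1 - p else - p)"
proof -
  have full: "(\<Sum>z\<in>Pow B. if B \<subseteq> z then (-1::real) ^ card (S \<inter> z) else 0) = (-1) ^ card (S \<inter> B)"
  proof -
    have "(\<Sum>z\<in>Pow B. if B \<subseteq> z then (-1::real) ^ card (S \<inter> z) else 0)
        = (\<Sum>z\<in>Pow B. if z = B then (-1) ^ card (S \<inter> z) else 0)"
      by (intro sum.cong) auto
    then show ?thesis
      using assms(1) by (simp add: sum.delta')
  qed
  have all: "(\<Sum>z\<in>Pow B. (-1::real) ^ card (S \<inter> z)) = (if S \<inter> B = {} then 2 ^ card B else 0)"
    using assms(1) by (rule sum_Pow_minus_one_power_card_Int)
  have p2: "p * 2 ^ card B = 1"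
    using assms(2) by (simp add: power_mult_distrib[symmetric])
  show ?thesis
  proof (cases e)
    case True
    with full show ?thesis by simp
  next
    case False
    then have "(\<Sum>z\<in>Pow B. if (B \<subseteq> z) = e then (-1::real) ^ card (S \<inter> z) else 0)
        = (\<Sum>z\<in>Pow B. (-1) ^ card (S \<inter> z)) - (\<Sum>z\<in>Pow B. if B \<subseteq> z then (-1) ^ card (S \<inter> z) else 0)"
      unfolding sum_subtractf[symmetric] by (intro sum.cong) auto
    with False full all p2 show ?thesis
      by (auto simp: right_diff_distrib)
  qed
qed

lemma sum_group_mult:
  fixes \<phi> w :: "'b \<Rightarrow> 'c::comm_semiring_1"
  assumes "finite A" "finite X" "H ` A \<subseteq> X"
  shows "(\<Sum>y\<in>A. \<phi> (H y) * w y) = (\<Sum>x\<in>X. \<phi> x * (\<Sum>y\<in>A. if H y = x then w y else 0))"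
proof -
  have "(\<Sum>y\<in>A. \<phi> (H y) * w y) = (\<Sum>x\<in>X. \<Sum>y\<in>{y \<in> A. H y = x}. \<phi> (H y) * w y)"
    by (rule sum.group[OF assms, symmetric])
  also have "\<dots> = (\<Sum>x\<in>X. \<phi> x * (\<Sum>y\<in>A. if H y = x then w y else 0))"
    unfolding sum_distrib_left sum.inter_filter[OF assms(1)] by (intro sum.cong refl) auto
  finally show ?thesis .
qed

lemma fourier_uniform:
  "fourier (1/2) N g S = (1/2) ^ N * (\<Sum>y\<in>Pow {1..N}. g y * (-1) ^ card (S \<inter> y))"
proof -
  have "mu (1/2) N y = (1/2) ^ N" if "y \<subseteq> {1..N}" for y
  proof -
    have "card y \<le> N"
      using card_mono[OF _ that] by simp
    then show ?thesis
      by (simp add: mu_def power_add[symmetric])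
  qed
  then show ?thesis
    unfolding fourier_def sum_distrib_left by (intro sum.cong) (auto simp: walsh_def)
qed

lemma scaled_mu_walsh_eq_prod:
  assumes "0 < p" "p < 1" "x \<subseteq> {1..n}" "T \<subseteq> {1..n}"
  shows "(- sqrt (p / (1 - p))) ^ card T * mu p n x * walsh p T x
       = (\<Prod>i\<in>{1..n}. if i \<in> x then p else if i \<in> T then - p else 1 - p)"
proof -
  define q where "q = sqrt (p / (1 - p))"
  define a where "a = - sqrt ((1 - p) / p)"
  have qa: "q * a = -1"
    using assms(1,2) by (simp add: q_def a_def real_sqrt_mult[symmetric])
  have qq: "q * q * (1 - p) = p"
    using assms(1,2) by (simp add: q_def)
  have T: "{1..n} \<inter> T = T" and x: "{1..n} \<inter> x = x"
    using assms(3,4) by auto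
  have "(- q) ^ card T = (\<Prod>i\<in>{1..n}. if i \<in> T then - q else 1)"
    using T by (simp add: prod.If_cases)
  moreover have "mu p n x = (\<Prod>i\<in>{1..n}. if i \<in> x then p else 1 - p)"
  proof -
    have "card ({1..n} \<inter> - {i. i \<in> x}) = n - card x"
      using assms(3) by (simp add: Diff_eq[symmetric] card_Diff_subset finite_subset)
    then show ?thesis
      using x by (simp add: mu_def prod.If_cases)
  qed
  moreover have "walsh p T x = (\<Prod>i\<in>{1..n}. if i \<in> T then if i \<in> x then a else q else 1)"
  proof -
    have "finite T"
      using assms(4) finite_subset by blast
    then have "(\<Prod>i\<in>T. if i \<in> x then a else q) = walsh p T x"
      by (simp add: walsh_def a_def q_def prod.If_cases Int_def set_diff_eq)
    then show ?thesis
      using T by (simp add: prod.If_cases)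
  qed
  ultimately have "(- q) ^ card T * mu p n x * walsh p T x
      = (\<Prod>i\<in>{1..n}. (if i \<in> T then - q else 1) * (if i \<in> x then p else 1 - p)
                          * (if i \<in> T then if i \<in> x then a else q else 1))"
    by (simp add: prod.distrib)
  also have "\<dots> = (\<Prod>i\<in>{1..n}. if i \<in> x then p else if i \<in> T then - p else 1 - p)"
  proof (intro prod.cong refl)
    fix i
    have "- q * p * a = - (q * a) * p" "- q * (1 - p) * q = - (q * q * (1 - p))"
      by (simp_all add: algebra_simps)
    then have "- q * p * a = p" "- q * (1 - p) * q = - p"
      using qa qq by simp_all
    then show "(if i \<in> T then - q else 1) * (if i \<in> x then p else 1 - p)
        * (if i \<in> T then if i \<in> x then a else q else 1)
        = (if i \<in> x then p else if i \<in> T then - p else 1 - p)"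
      by (simp only: split: if_splits) simp_all
  qed
  finally show ?thesis
    by (simp add: q_def)
qed

definition coord_block :: "nat \<Rightarrow> nat \<Rightarrow> nat set" where
  "coord_block m i = {(i - 1) * m + 1 .. i * m}"

lemma block_eq_Int_coord_block: "block m S i = S \<inter> coord_block m i"
  by (simp add: block_def coord_block_def)

lemma finite_coord_block [simp]: "finite (coord_block m i)"
  by (simp add: coord_block_def)

lemma coord_block_eq: "1 \<le> i \<Longrightarrow> coord_block m i = {(i - 1) * m + 1 .. (i - 1) * m + m}"
  by (cases i) (simp_all add: coord_block_def)

lemma card_coord_block: "1 \<le> i \<Longrightarrow> card (coord_block m i) = m"
  by (simp add: coord_block_eq)

lemma disjoint_family_coord_block: "disjoint_family (coord_block m)"
proof -
  have "coord_block m i \<inter> coord_block m j = {}" if "i < j" for i j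
  proof -
    have ij: "i * m \<le> (j - 1) * m"
      using that by (intro mult_le_mono1) simp
    have "x \<notin> coord_block m j" if "x \<in> coord_block m i" for x
      using that ij unfolding coord_block_def atLeastAtMost_iff by linarith
    then show ?thesis by blast
  qed
  then show ?thesis
    unfolding disjoint_family_on_def by (metis Int_commute linorder_neqE_nat)
qed

lemma UN_coord_block: "(\<Union>i\<in>{1..n}. coord_block m i) = {1..m * n}"
proof (induction n)
  case (Suc n)
  have "{1..m * Suc n} = {1..m * n} \<union> coord_block m (Suc n)"
    by (auto simp: coord_block_def mult.commute)
  with Suc show ?case by (simp add: atLeastAtMostSuc_conv Un_commute)
qed simp

lemma card_eq_sum_card_Int_coord_block:
  assumes "T \<subseteq> {1..m * n}"
  shows "card T = (\<Sum>i\<in>{1..n}. card (T \<inter> coord_block m i))"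
proof -
  have "T = (\<Union>i\<in>{1..n}. T \<inter> coord_block m i)"
    unfolding Int_UN_distrib[symmetric] UN_coord_block using assms by blast
  also have "card \<dots> = (\<Sum>i\<in>{1..n}. card (T \<inter> coord_block m i))"
  proof (rule card_UN_disjoint')
    show "disjoint_family_on (\<lambda>i. T \<inter> coord_block m i) {1..n}"
      using disjoint_family_coord_block[of m] unfolding disjoint_family_on_def by blast
  qed simp_all
  finally show ?thesis .
qed

lemma hred_iff_block_bits:
  assumes "1 \<le> m"
  shows "hred m y i \<longleftrightarrow> (\<forall>j\<in>{0..m - 1}. (i - 1) * m + (m - j) \<in> y)"
proof -
  have "{0..m - 1} = {0..<m}"
    using assms by auto
  then have top: "(\<Sum>j = 0..m - 1. 2 ^ j) = (2::nat) ^ m - 1"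
    by (simp add: sum_power2)
  have bit_le: "2 ^ j * blockbit m y i (m - j) \<le> (2::nat) ^ j" for j
    by (simp add: blockbit_def)
  have "Bin m y i \<le> (\<Sum>j = 0..m - 1. 2 ^ j)"
    unfolding Bin_def by (intro sum_mono bit_le)
  then have "hred m y i \<longleftrightarrow> Bin m y i = (\<Sum>j = 0..m - 1. 2 ^ j)"
    unfolding hred_def top[symmetric] by auto
  also have "\<dots> \<longleftrightarrow> (\<forall>j\<in>{0..m - 1}. 2 ^ j * blockbit m y i (m - j) = 2 ^ j)"
  proof
    assume eq: "Bin m y i = (\<Sum>j = 0..m - 1. 2 ^ j)"
    show "\<forall>j\<in>{0..m - 1}. 2 ^ j * blockbit m y i (m - j) = 2 ^ j"
      using sum_mono_inv[OF eq[unfolded Bin_def] bit_le] by simp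
  next
    assume "\<forall>j\<in>{0..m - 1}. 2 ^ j * blockbit m y i (m - j) = 2 ^ j"
    then show "Bin m y i = (\<Sum>j = 0..m - 1. 2 ^ j)"
      unfolding Bin_def by (intro sum.cong) auto
  qed
  also have "\<dots> \<longleftrightarrow> (\<forall>j\<in>{0..m - 1}. (i - 1) * m + (m - j) \<in> y)"
    by (simp add: blockbit_def)
  finally show ?thesis .
qed

lemma hred_iff_coord_block_subset:
  assumes "1 \<le> m" "1 \<le> i"
  shows "hred m y i \<longleftrightarrow> coord_block m i \<subseteq> y"
proof -
  have "hred m y i \<longleftrightarrow> (\<forall>k\<in>{1..m}. (i - 1) * m + k \<in> y)"
    unfolding hred_iff_block_bits[OF assms(1)]
  proof
    assume all: "\<forall>j\<in>{0..m - 1}. (i - 1) * m + (m - j) \<in> y"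
    show "\<forall>k\<in>{1..m}. (i - 1) * m + k \<in> y"
    proof
      fix k assume "k \<in> {1..m}"
      then have "m - k \<in> {0..m - 1}" "m - (m - k) = k" by auto
      with all show "(i - 1) * m + k \<in> y" by (metis (no_types))
    qed
  next
    assume all: "\<forall>k\<in>{1..m}. (i - 1) * m + k \<in> y"
    have "m - j \<in> {1..m}" if "j \<in> {0..m - 1}" for j
      using that assms(1) by auto
    with all show "\<forall>j\<in>{0..m - 1}. (i - 1) * m + (m - j) \<in> y"
      by blast
  qed
  also have "\<dots> \<longleftrightarrow> coord_block m i \<subseteq> y"
  proof -
    have block: "coord_block m i = (+) ((i - 1) * m) ` {1..m}"
      using assms(2) by (simp add: coord_block_eq)
    show ?thesis
      unfolding block image_subset_iff by simp
  qed
  finally show ?thesis .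
qed

definition full_blocks :: "nat \<Rightarrow> nat \<Rightarrow> nat set \<Rightarrow> nat set" where
  "full_blocks m n y = {i \<in> {1..n}. coord_block m i \<subseteq> y}"

lemma Red_eq_full_blocks: "1 \<le> m \<Longrightarrow> Red m n f y = f (full_blocks m n y)"
  unfolding Red_def full_blocks_def
  by (rule arg_cong[where f=f]) (auto simp: hred_iff_coord_block_subset)

lemma Sprime_eq: "Sprime m n S = {i \<in> {1..n}. S \<inter> coord_block m i \<noteq> {}}"
  by (simp add: Sprime_def block_eq_Int_coord_block card_gt_0_iff)

lemma sum_full_blocks_fiber_eq_prod:
  assumes "x \<subseteq> {1..n}"
  shows "(\<Sum>y\<in>Pow {1..m * n}. if full_blocks m n y = x then (-1::real) ^ card (S \<inter> y) else 0)
       = (\<Prod>i\<in>{1..n}. \<Sum>z\<in>Pow (coord_block m i).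
            if (coord_block m i \<subseteq> z) = (i \<in> x) then (-1) ^ card (S \<inter> z) else 0)"
proof -
  define F where
    "F i z = (if (coord_block m i \<subseteq> z) = (i \<in> x) then (-1::real) ^ card (S \<inter> z) else 0)" for i z
  have fiber: "(if full_blocks m n y = x then (-1::real) ^ card (S \<inter> y) else 0)
      = (\<Prod>i\<in>{1..n}. F i (y \<inter> coord_block m i))" if "y \<subseteq> {1..m * n}" for y
  proof (cases "\<forall>i\<in>{1..n}. (coord_block m i \<subseteq> y) = (i \<in> x)")
    case True
    then have "full_blocks m n y = x"
      using assms by (auto simp: full_blocks_def)
    moreover have "card (S \<inter> y) = (\<Sum>i\<in>{1..n}. card (S \<inter> y \<inter> coord_block m i))"
      using that by (intro card_eq_sum_card_Int_coord_block) auto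
    ultimately show ?thesis
      using True by (simp add: F_def power_sum Int_assoc)
  next
    case False
    then obtain i where i: "i \<in> {1..n}" "(coord_block m i \<subseteq> y) \<noteq> (i \<in> x)"
      by blast
    then have "full_blocks m n y \<noteq> x" "F i (y \<inter> coord_block m i) = 0"
      by (auto simp: full_blocks_def F_def)
    with i show ?thesis
      by (metis finite_atLeastAtMost prod_zero)
  qed
  have "(\<Sum>y\<in>Pow {1..m * n}. if full_blocks m n y = x then (-1::real) ^ card (S \<inter> y) else 0)
      = (\<Sum>y\<in>Pow (\<Union>i\<in>{1..n}. coord_block m i). \<Prod>i\<in>{1..n}. F i (y \<inter> coord_block m i))"
    unfolding UN_coord_block by (intro sum.cong) (simp_all add: fiber)
  also have "\<dots> = (\<Prod>i\<in>{1..n}. \<Sum>z\<in>Pow (coord_block m i). F i z)"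
    using disjoint_family_on_mono[OF subset_UNIV disjoint_family_coord_block]
    by (intro sum_Pow_UN_prod) simp_all
  finally show ?thesis
    by (simp add: F_def)
qed

lemma uniform_fiber_sum_full_blocks:
  fixes p :: real
  assumes "S \<subseteq> {1..m * n}" "x \<subseteq> {1..n}" "p = (1/2) ^ m"
  shows "(1/2) ^ (m * n) * (\<Sum>y\<in>Pow {1..m * n}. if full_blocks m n y = x then (-1) ^ card (S \<inter> y) else 0)
       = (-1) ^ card S * (\<Prod>i\<in>{1..n}. if i \<in> x then p else if i \<in> Sprime m n S then - p else 1 - p)"
proof -
  have "(1/2::real) ^ (m * n) = (\<Prod>i\<in>{1..n}. p)"
    using assms(3) by (simp add: power_mult)
  then have "(1/2) ^ (m * n) * (\<Sum>y\<in>Pow {1..m * n}. if full_blocks m n y = x then (-1) ^ card (S \<inter> y) else 0)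
      = (\<Prod>i\<in>{1..n}. p) * (\<Prod>i\<in>{1..n}. \<Sum>z\<in>Pow (coord_block m i).
            if (coord_block m i \<subseteq> z) = (i \<in> x) then (-1) ^ card (S \<inter> z) else 0)"
    by (simp only: sum_full_blocks_fiber_eq_prod[OF assms(2)])
  also have "\<dots> = (\<Prod>i\<in>{1..n}. p * (\<Sum>z\<in>Pow (coord_block m i).
            if (coord_block m i \<subseteq> z) = (i \<in> x) then (-1) ^ card (S \<inter> z) else 0))"
    by (rule prod.distrib[symmetric])
  also have "\<dots> = (\<Prod>i\<in>{1..n}. (-1) ^ card (S \<inter> coord_block m i)
      * (if i \<in> x then p else if i \<in> Sprime m n S then - p else 1 - p))"
  proof (rule prod.cong[OF refl])
    fix i assume i: "i \<in> {1..n}"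
    then have "p = (1/2) ^ card (coord_block m i)"
      using assms(3) by (simp add: card_coord_block)
    note block = sum_Pow_indicator_subset[OF finite_coord_block this]
    have "S \<inter> coord_block m i = {} \<longleftrightarrow> i \<notin> Sprime m n S"
      using i by (simp add: Sprime_eq)
    then show "p * (\<Sum>z\<in>Pow (coord_block m i).
          if (coord_block m i \<subseteq> z) = (i \<in> x) then (-1) ^ card (S \<inter> z) else 0)
        = (-1) ^ card (S \<inter> coord_block m i)
          * (if i \<in> x then p else if i \<in> Sprime m n S then - p else 1 - p)"
      unfolding block by simp
  qed
  also have "\<dots> = (-1) ^ card S * (\<Prod>i\<in>{1..n}. if i \<in> x then p else if i \<in> Sprime m n S then - p else 1 - p)"
    unfolding prod.distrib card_eq_sum_card_Int_coord_block[OF assms(1)] power_sum ..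
  finally show ?thesis .
qed

theorem proposition2p1:
  fixes m n :: nat and p :: real and f :: "nat set \<Rightarrow> real" and S :: "nat set"
  assumes "m \<ge> 1" and "p = 1 / 2 ^ m" and "S \<subseteq> {1..m * n}"
  shows "fourier (1/2) (m * n) (Red m n f) S
       = (- sqrt (p / (1 - p))) ^ card (Sprime m n S) * (-1) ^ card S * fourier p n f (Sprime m n S)"
proof -
  have p: "p = (1/2) ^ m"
    using assms(2) by (simp add: power_divide)
  have "(1/2::real) ^ m < 1"
    using assms(1) by (simp add: power_less_one_iff)
  then have "0 < p" "p < 1"
    using p by simp_all
  have S': "Sprime m n S \<subseteq> {1..n}"
    by (auto simp: Sprime_def)
  have "fourier (1/2) (m * n) (Red m n f) S
      = (1/2) ^ (m * n) * (\<Sum>y\<in>Pow {1..m * n}. f (full_blocks m n y) * (-1) ^ card (S \<inter> y))"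
    using assms(1) by (simp add: fourier_uniform Red_eq_full_blocks)
  also have "\<dots> = (\<Sum>x\<in>Pow {1..n}. f x * ((1/2) ^ (m * n)
      * (\<Sum>y\<in>Pow {1..m * n}. if full_blocks m n y = x then (-1) ^ card (S \<inter> y) else 0)))"
    by (subst sum_group_mult[where X = "Pow {1..n}"])
      (auto simp: full_blocks_def sum_distrib_left mult.left_commute)
  also have "\<dots> = (\<Sum>x\<in>Pow {1..n}. f x * ((-1) ^ card S
      * ((- sqrt (p / (1 - p))) ^ card (Sprime m n S) * mu p n x * walsh p (Sprime m n S) x)))"
    by (intro sum.cong refl) (simp only: Pow_iff uniform_fiber_sum_full_blocks[OF assms(3) _ p]
        scaled_mu_walsh_eq_prod[OF \<open>0 < p\<close> \<open>p < 1\<close> _ S'])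
  also have "\<dots> = (- sqrt (p / (1 - p))) ^ card (Sprime m n S) * (-1) ^ card S * fourier p n f (Sprime m n S)"
    by (simp add: fourier_def sum_distrib_left mult_ac)
  finally show ?thesis .
qed

end
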